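(* Let $\mathcal{C}$, $Q$, $A_0$, $x_0$ be as in the context (conditions (1Q), (2Q)), and let $\Phi$ be an automorphism of $\mathcal{C}$. Suppose $(t_A:Q(A)\to Q(\Phi(A)))_{A\in\mathrm{Ob}\,\mathcal{C}}$ is a family of $\mathcal{C}$-bijections such that $Q(\Phi(\mu))\circ t_A=t_B\circ Q(\mu)$ for every morphism $\mu:A\to B$. Then there exists a central function $(d_A)_{A\in\mathrm{Ob}\,\mathcal{C}}$ such that for every object $A$, $$t_A=\big(c^{\Phi^{-1}}_{\Phi(A)}\big)^{-1}\circ s^{\Phi}_A\circ d_A,$$ where $c^{\Phi^{-1}}_{\Phi(A)}=s^{\Phi}_{A}\circ s^{\Phi^{-1}}_{\Phi(A)}:Q(\Phi(A))\to Q(\Phi(A))$ and $\big(c^{\Phi^{-1}}_{\Phi(A)}\big)^{-1}$ denotes the inverse of this injective map on its image.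
   Context: (1Q): for every object $A$ and every $a\in Q(A)$ there is exactly one morphism $\alpha^A_a:A_0\to A$ with $Q(\alpha^A_a)(x_0)=a$. (2Q): for every object $A$ there is a morphism $A\to A_0$ whose image under $Q$ is surjective. $Q$ is faithful. A $\mathcal{C}$-bijection $s:Q(A)\to Q(B)$ is an injective map such that for all morphisms $\alpha_1,\alpha_2:B\to C$, $Q(\alpha_1)\circ s=Q(\alpha_2)\circ s$ implies $\alpha_1=\alpha_2$. A central function is a family of $\mathcal{C}$-bijections $d_A:Q(A)\to Q(A)$ with $d_B\circ Q(\mu)=Q(\mu)\circ d_A$ for all morphisms $\mu:A\to B$. Main function: for an automorphism $\Psi$ of $\mathcal{C}$ fix a morphism $\eta^{\Psi}_0:\Psi^{-1}(A_0)\to A_0$ with $Q(\eta^\Psi_0)$ surjective (taken to be the identity if $\Psi(A_0)=A_0$), put $\eta^\Psi=\Psi(\eta^\Psi_0):A_0\to\Psi(A_0)$, and define $s^\Psi_A:Q(A)\to Q(\Psi(A))$ by $s^\Psi_A(a)=Q(\Psi(\alpha^A_a)\circ\eta^\Psi)(x_0)$. This is applied with $\Psi=\Phi$ and $\Psi=\Phi^{-1}$. *)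

theory Defs
  imports Main
begin

text \<open>A (small-style) category given by explicit object and morphism carriers.
  Cmp C g f is the composite g after f.\<close>
record ('o,'m) cat =
  Ob  :: "'o set"
  Mor :: "'m set"
  Dom :: "'m \<Rightarrow> 'o"
  Cod :: "'m \<Rightarrow> 'o"
  Cmp :: "'m \<Rightarrow> 'm \<Rightarrow> 'm"
  Idm :: "'o \<Rightarrow> 'm"

definition hom :: "('o,'m) cat \<Rightarrow> 'o \<Rightarrow> 'o \<Rightarrow> 'm set" where
  "hom C A B = {f \<in> Mor C. Dom C f = A \<and> Cod C f = B}"

definition is_category :: "('o,'m) cat \<Rightarrow> bool" where
  "is_category C \<longleftrightarrow>
     (\<forall>f \<in> Mor C. Dom C f \<in> Ob C \<and> Cod C f \<in> Ob C)
   \<and> (\<forall>A \<in> Ob C. Idm C A \<in> hom C A A)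
   \<and> (\<forall>A B D f g. f \<in> hom C A B \<longrightarrow> g \<in> hom C B D \<longrightarrow> Cmp C g f \<in> hom C A D)
   \<and> (\<forall>A B D E f g h. f \<in> hom C A B \<longrightarrow> g \<in> hom C B D \<longrightarrow> h \<in> hom C D E \<longrightarrow>
        Cmp C h (Cmp C g f) = Cmp C (Cmp C h g) f)
   \<and> (\<forall>A B f. f \<in> hom C A B \<longrightarrow> Cmp C f (Idm C A) = f \<and> Cmp C (Idm C B) f = f)"

definition is_endofunctor :: "('o,'m) cat \<Rightarrow> ('o \<Rightarrow> 'o) \<Rightarrow> ('m \<Rightarrow> 'm) \<Rightarrow> bool" where
  "is_endofunctor C Fo Fm \<longleftrightarrow>
     (\<forall>A \<in> Ob C. Fo A \<in> Ob C)
   \<and> (\<forall>A B f. f \<in> hom C A B \<longrightarrow> Fm f \<in> hom C (Fo A) (Fo B))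
   \<and> (\<forall>A \<in> Ob C. Fm (Idm C A) = Idm C (Fo A))
   \<and> (\<forall>A B D f g. f \<in> hom C A B \<longrightarrow> g \<in> hom C B D \<longrightarrow>
        Fm (Cmp C g f) = Cmp C (Fm g) (Fm f))"

text \<open>An automorphism of the category: a functor bijective on objects and on morphisms
  (its inverse is then automatically a functor).\<close>
definition is_automorphism :: "('o,'m) cat \<Rightarrow> ('o \<Rightarrow> 'o) \<Rightarrow> ('m \<Rightarrow> 'm) \<Rightarrow> bool" where
  "is_automorphism C Fo Fm \<longleftrightarrow>
     is_endofunctor C Fo Fm \<and> bij_betw Fo (Ob C) (Ob C) \<and> bij_betw Fm (Mor C) (Mor C)"

text \<open>A (covariant) set-valued functor Q: Qo A is the set Q(A), Qm f the map Q(f)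
  (only its values on Q(dom f) matter).\<close>
definition is_set_functor :: "('o,'m) cat \<Rightarrow> ('o \<Rightarrow> 'x set) \<Rightarrow> ('m \<Rightarrow> 'x \<Rightarrow> 'x) \<Rightarrow> bool" where
  "is_set_functor C Qo Qm \<longleftrightarrow>
     (\<forall>A B f. f \<in> hom C A B \<longrightarrow> Qm f ` Qo A \<subseteq> Qo B)
   \<and> (\<forall>A \<in> Ob C. \<forall>x \<in> Qo A. Qm (Idm C A) x = x)
   \<and> (\<forall>A B D f g. f \<in> hom C A B \<longrightarrow> g \<in> hom C B D \<longrightarrow>
        (\<forall>x \<in> Qo A. Qm (Cmp C g f) x = Qm g (Qm f x)))"

definition faithful :: "('o,'m) cat \<Rightarrow> ('o \<Rightarrow> 'x set) \<Rightarrow> ('m \<Rightarrow> 'x \<Rightarrow> 'x) \<Rightarrow> bool" where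
  "faithful C Qo Qm \<longleftrightarrow>
     (\<forall>A B f g. f \<in> hom C A B \<longrightarrow> g \<in> hom C A B \<longrightarrow> (\<forall>x \<in> Qo A. Qm f x = Qm g x) \<longrightarrow> f = g)"

definition cond_1Q :: "('o,'m) cat \<Rightarrow> ('o \<Rightarrow> 'x set) \<Rightarrow> ('m \<Rightarrow> 'x \<Rightarrow> 'x) \<Rightarrow> 'o \<Rightarrow> 'x \<Rightarrow> bool" where
  "cond_1Q C Qo Qm A0 x0 \<longleftrightarrow>
     (\<forall>A \<in> Ob C. \<forall>a \<in> Qo A. \<exists>!\<alpha>. \<alpha> \<in> hom C A0 A \<and> Qm \<alpha> x0 = a)"

definition cond_2Q :: "('o,'m) cat \<Rightarrow> ('o \<Rightarrow> 'x set) \<Rightarrow> ('m \<Rightarrow> 'x \<Rightarrow> 'x) \<Rightarrow> 'o \<Rightarrow> bool" where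
  "cond_2Q C Qo Qm A0 \<longleftrightarrow>
     (\<forall>A \<in> Ob C. \<exists>f \<in> hom C A A0. Qm f ` Qo A = Qo A0)"

definition alpha :: "('o,'m) cat \<Rightarrow> ('m \<Rightarrow> 'x \<Rightarrow> 'x) \<Rightarrow> 'o \<Rightarrow> 'x \<Rightarrow> 'o \<Rightarrow> 'x \<Rightarrow> 'm" where
  "alpha C Qm A0 x0 A a = (THE \<alpha>. \<alpha> \<in> hom C A0 A \<and> Qm \<alpha> x0 = a)"

definition C_bijection :: "('o,'m) cat \<Rightarrow> ('o \<Rightarrow> 'x set) \<Rightarrow> ('m \<Rightarrow> 'x \<Rightarrow> 'x) \<Rightarrow>
    'o \<Rightarrow> 'o \<Rightarrow> ('x \<Rightarrow> 'x) \<Rightarrow> bool" where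
  "C_bijection C Qo Qm A B s \<longleftrightarrow>
     s ` Qo A \<subseteq> Qo B \<and> inj_on s (Qo A)
   \<and> (\<forall>D \<alpha>1 \<alpha>2. \<alpha>1 \<in> hom C B D \<longrightarrow> \<alpha>2 \<in> hom C B D \<longrightarrow>
        (\<forall>x \<in> Qo A. Qm \<alpha>1 (s x) = Qm \<alpha>2 (s x)) \<longrightarrow> \<alpha>1 = \<alpha>2)"

definition central_function :: "('o,'m) cat \<Rightarrow> ('o \<Rightarrow> 'x set) \<Rightarrow> ('m \<Rightarrow> 'x \<Rightarrow> 'x) \<Rightarrow>
    ('o \<Rightarrow> 'x \<Rightarrow> 'x) \<Rightarrow> bool" where
  "central_function C Qo Qm d \<longleftrightarrow>
     (\<forall>A \<in> Ob C. C_bijection C Qo Qm A A (d A))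
   \<and> (\<forall>A B \<mu>. \<mu> \<in> hom C A B \<longrightarrow> (\<forall>x \<in> Qo A. d B (Qm \<mu> x) = Qm \<mu> (d A x)))"

text \<open>Admissible choice of eta^Psi_0 for an automorphism Psi (object map Psio, inverse object
  map Psiinvo): a morphism Psi^{-1}(A0) -> A0 with surjective Q-image, the identity if
  Psi(A0) = A0.\<close>
definition eta0_ok :: "('o,'m) cat \<Rightarrow> ('o \<Rightarrow> 'x set) \<Rightarrow> ('m \<Rightarrow> 'x \<Rightarrow> 'x) \<Rightarrow> 'o \<Rightarrow>
    ('o \<Rightarrow> 'o) \<Rightarrow> ('o \<Rightarrow> 'o) \<Rightarrow> 'm \<Rightarrow> bool" where
  "eta0_ok C Qo Qm A0 Psio Psiinvo eta0 \<longleftrightarrow>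
     eta0 \<in> hom C (Psiinvo A0) A0
   \<and> Qm eta0 ` Qo (Psiinvo A0) = Qo A0
   \<and> (Psio A0 = A0 \<longrightarrow> eta0 = Idm C A0)"

definition main_fun :: "('o,'m) cat \<Rightarrow> ('m \<Rightarrow> 'x \<Rightarrow> 'x) \<Rightarrow> 'o \<Rightarrow> 'x \<Rightarrow>
    ('m \<Rightarrow> 'm) \<Rightarrow> 'm \<Rightarrow> 'o \<Rightarrow> 'x \<Rightarrow> 'x" where
  "main_fun C Qm A0 x0 Psim eta0 A a =
     Qm (Cmp C (Psim (alpha C Qm A0 x0 A a)) (Psim eta0)) x0"

end

theory Submission
  imports Defs
begin

(* Both main functions are injective and natural, s^Psi_B o Q(mu) = Q(Psi mu) o s^Psi_A,
   because by (1Q) the value s^Psi_A(a) determines the morphism Psi(alpha^A_a) o eta^Psi,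
   Psi is faithful and Q(eta^Psi_0) is surjective.  Hence d_A = s^(Phi^-1)_(Phi A) o t_A is a
   natural family of injections Q(A) -> Q(A); it inherits the cancellation property of t_A,
   so it is a central function, and s^Phi_A o d_A = c o t_A with c injective. *)

lemma hom_Ob:
  assumes "is_category C" "f \<in> hom C A B"
  shows "A \<in> Ob C" "B \<in> Ob C"
  using assms unfolding is_category_def hom_def by auto

lemma Cmp_in_hom:
  "is_category C \<Longrightarrow> f \<in> hom C A B \<Longrightarrow> g \<in> hom C B D \<Longrightarrow> Cmp C g f \<in> hom C A D"
  unfolding is_category_def by blast

lemma Cmp_assoc:
  "is_category C \<Longrightarrow> f \<in> hom C A B \<Longrightarrow> g \<in> hom C B D \<Longrightarrow> h \<in> hom C D E \<Longrightarrow>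
    Cmp C h (Cmp C g f) = Cmp C (Cmp C h g) f"
  unfolding is_category_def by blast

lemma set_functor_in:
  "is_set_functor C Qo Qm \<Longrightarrow> f \<in> hom C A B \<Longrightarrow> x \<in> Qo A \<Longrightarrow> Qm f x \<in> Qo B"
  unfolding is_set_functor_def by blast

lemma set_functor_Cmp:
  "is_set_functor C Qo Qm \<Longrightarrow> f \<in> hom C A B \<Longrightarrow> g \<in> hom C B D \<Longrightarrow> x \<in> Qo A \<Longrightarrow>
    Qm (Cmp C g f) x = Qm g (Qm f x)"
  unfolding is_set_functor_def by blast

lemma endofunctor_Ob: "is_endofunctor C Fo Fm \<Longrightarrow> A \<in> Ob C \<Longrightarrow> Fo A \<in> Ob C"
  unfolding is_endofunctor_def by blast

lemma endofunctor_hom: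
  "is_endofunctor C Fo Fm \<Longrightarrow> f \<in> hom C A B \<Longrightarrow> Fm f \<in> hom C (Fo A) (Fo B)"
  unfolding is_endofunctor_def by blast

lemma endofunctor_Cmp:
  "is_endofunctor C Fo Fm \<Longrightarrow> f \<in> hom C A B \<Longrightarrow> g \<in> hom C B D \<Longrightarrow>
    Fm (Cmp C g f) = Cmp C (Fm g) (Fm f)"
  unfolding is_endofunctor_def by blast

lemma
  assumes "cond_1Q C Qo Qm A0 x0" "A \<in> Ob C" "a \<in> Qo A"
  shows alpha_in_hom: "alpha C Qm A0 x0 A a \<in> hom C A0 A"
    and alpha_apply: "Qm (alpha C Qm A0 x0 A a) x0 = a"
proof -
  have "\<exists>!\<alpha>. \<alpha> \<in> hom C A0 A \<and> Qm \<alpha> x0 = a"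
    using assms unfolding cond_1Q_def by blast
  then have "alpha C Qm A0 x0 A a \<in> hom C A0 A \<and> Qm (alpha C Qm A0 x0 A a) x0 = a"
    unfolding alpha_def by (rule theI')
  then show "alpha C Qm A0 x0 A a \<in> hom C A0 A" "Qm (alpha C Qm A0 x0 A a) x0 = a"
    by auto
qed

lemma alpha_eqI:
  assumes "cond_1Q C Qo Qm A0 x0" "A \<in> Ob C" "\<alpha> \<in> hom C A0 A" "Qm \<alpha> x0 = a" "a \<in> Qo A"
  shows "alpha C Qm A0 x0 A a = \<alpha>"
proof -
  have "\<exists>!\<alpha>. \<alpha> \<in> hom C A0 A \<and> Qm \<alpha> x0 = a"
    using assms unfolding cond_1Q_def by blast
  then show ?thesis
    unfolding alpha_def using assms by (blast intro: the1_equality)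
qed

lemma
  assumes "is_automorphism C Fo Fm"
  shows automorphism_inv_into_f_f_Ob: "A \<in> Ob C \<Longrightarrow> inv_into (Ob C) Fo (Fo A) = A"
    and automorphism_f_inv_into_f_Ob: "A \<in> Ob C \<Longrightarrow> Fo (inv_into (Ob C) Fo A) = A"
    and automorphism_inv_into_f_f_Mor: "f \<in> Mor C \<Longrightarrow> inv_into (Mor C) Fm (Fm f) = f"
    and automorphism_f_inv_into_f_Mor: "f \<in> Mor C \<Longrightarrow> Fm (inv_into (Mor C) Fm f) = f"
  using assms unfolding is_automorphism_def bij_betw_def
  by (auto simp: inv_into_f_f f_inv_into_f)

lemma automorphism_inv_into_hom:
  assumes cat: "is_category C" and F: "is_automorphism C Fo Fm" and f: "f \<in> hom C A B"
  shows "inv_into (Mor C) Fm f \<in> hom C (inv_into (Ob C) Fo A) (inv_into (Ob C) Fo B)"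
proof -
  let ?g = "inv_into (Mor C) Fm f"
  have bm: "bij_betw Fm (Mor C) (Mor C)" and Fhom: "is_endofunctor C Fo Fm"
    using F unfolding is_automorphism_def by auto
  have "f \<in> Mor C" using f unfolding hom_def by simp
  then have g: "?g \<in> Mor C" "Fm ?g = f"
    using bm automorphism_f_inv_into_f_Mor[OF F] by (auto simp: bij_betw_def intro: inv_into_into)
  then have g_hom: "?g \<in> hom C (Dom C ?g) (Cod C ?g)" unfolding hom_def by simp
  then have "f \<in> hom C (Fo (Dom C ?g)) (Fo (Cod C ?g))"
    using endofunctor_hom[OF Fhom] g(2) by metis
  then have "A = Fo (Dom C ?g)" "B = Fo (Cod C ?g)" using f unfolding hom_def by auto
  moreover have "Dom C ?g \<in> Ob C" "Cod C ?g \<in> Ob C" using hom_Ob[OF cat g_hom] .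
  ultimately show ?thesis
    using g_hom automorphism_inv_into_f_f_Ob[OF F] by simp
qed

lemma is_automorphism_inv_into:
  assumes cat: "is_category C" and F: "is_automorphism C Fo Fm"
  shows "is_automorphism C (inv_into (Ob C) Fo) (inv_into (Mor C) Fm)"
proof -
  let ?Gi = "inv_into (Ob C) Fo" and ?Gm = "inv_into (Mor C) Fm"
  have bo: "bij_betw Fo (Ob C) (Ob C)" and bm: "bij_betw Fm (Mor C) (Mor C)"
    and Fhom: "is_endofunctor C Fo Fm"
    using F unfolding is_automorphism_def by auto
  have Gm_hom: "?Gm f \<in> hom C (?Gi A) (?Gi B)" if "f \<in> hom C A B" for f A B
    by (rule automorphism_inv_into_hom[OF cat F that])
  have "?Gm (Idm C A) = Idm C (?Gi A)" if A: "A \<in> Ob C" for A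
  proof -
    have "?Gi A \<in> Ob C" using bo A by (simp add: bij_betw_def inv_into_into)
    then have "Idm C (?Gi A) \<in> Mor C" "Fm (Idm C (?Gi A)) = Idm C A"
      using cat Fhom automorphism_f_inv_into_f_Ob[OF F A]
      unfolding is_category_def is_endofunctor_def hom_def by auto
    then show ?thesis using automorphism_inv_into_f_f_Mor[OF F] by metis
  qed
  moreover have "?Gm (Cmp C g f) = Cmp C (?Gm g) (?Gm f)"
    if f: "f \<in> hom C A B" and g: "g \<in> hom C B D" for A B D f g
  proof -
    have gf: "Cmp C (?Gm g) (?Gm f) \<in> hom C (?Gi A) (?Gi D)"
      using Cmp_in_hom[OF cat Gm_hom[OF f] Gm_hom[OF g]] .
    have "Fm (Cmp C (?Gm g) (?Gm f)) = Cmp C g f"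
      using endofunctor_Cmp[OF Fhom Gm_hom[OF f] Gm_hom[OF g]] f g
        automorphism_f_inv_into_f_Mor[OF F] unfolding hom_def by simp
    then show ?thesis using automorphism_inv_into_f_f_Mor[OF F] gf unfolding hom_def by force
  qed
  ultimately have "is_endofunctor C ?Gi ?Gm"
    using bo Gm_hom unfolding is_endofunctor_def by (auto simp: bij_betw_def inv_into_into)
  then show ?thesis
    using bo bm unfolding is_automorphism_def by (simp add: bij_betw_inv_into)
qed

locale main_function =
  fixes C :: "('o,'m) cat" and Qo :: "'o \<Rightarrow> 'x set" and Qm :: "'m \<Rightarrow> 'x \<Rightarrow> 'x"
    and A0 :: 'o and x0 :: 'x and Psio :: "'o \<Rightarrow> 'o" and Psim :: "'m \<Rightarrow> 'm"
    and B0 :: 'o and eta0 :: 'm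
  assumes cat: "is_category C"
    and Q: "is_set_functor C Qo Qm"
    and faith: "faithful C Qo Qm"
    and x0: "x0 \<in> Qo A0"
    and Q1: "cond_1Q C Qo Qm A0 x0"
    and Psi: "is_endofunctor C Psio Psim"
    and Psi_inj: "inj_on Psim (Mor C)"
    and eta0: "eta0 \<in> hom C B0 A0"
    and eta0_surj: "Qm eta0 ` Qo B0 = Qo A0"
    and Psi_B0: "Psio B0 = A0"
begin

abbreviation s :: "'o \<Rightarrow> 'x \<Rightarrow> 'x" where
  "s \<equiv> main_fun C Qm A0 x0 Psim eta0"

abbreviation main_mor :: "'o \<Rightarrow> 'x \<Rightarrow> 'm" where
  "main_mor A a \<equiv> Cmp C (Psim (alpha C Qm A0 x0 A a)) (Psim eta0)"

lemma main_mor_in_hom: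
  assumes "A \<in> Ob C" "a \<in> Qo A"
  shows "main_mor A a \<in> hom C A0 (Psio A)"
proof -
  have "Psim eta0 \<in> hom C A0 (Psio A0)"
    using endofunctor_hom[OF Psi eta0] Psi_B0 by simp
  then show ?thesis
    using Cmp_in_hom[OF cat] endofunctor_hom[OF Psi alpha_in_hom[OF Q1 assms]] by blast
qed

lemma main_fun_in:
  assumes "A \<in> Ob C" "a \<in> Qo A"
  shows "s A a \<in> Qo (Psio A)"
  unfolding main_fun_def using set_functor_in[OF Q main_mor_in_hom[OF assms] x0] .

lemma alpha_main_fun:
  assumes "A \<in> Ob C" "a \<in> Qo A"
  shows "alpha C Qm A0 x0 (Psio A) (s A a) = main_mor A a"
  using alpha_eqI[OF Q1 endofunctor_Ob[OF Psi assms(1)] main_mor_in_hom[OF assms]]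
    main_fun_in[OF assms] by (simp add: main_fun_def)

lemma inj_on_main_fun:
  assumes A: "A \<in> Ob C"
  shows "inj_on (s A) (Qo A)"
proof
  fix a a' assume a: "a \<in> Qo A" and a': "a' \<in> Qo A" and eq: "s A a = s A a'"
  let ?\<alpha> = "alpha C Qm A0 x0 A a" and ?\<alpha>' = "alpha C Qm A0 x0 A a'"
  have \<alpha>: "?\<alpha> \<in> hom C A0 A" and \<alpha>': "?\<alpha>' \<in> hom C A0 A"
    using alpha_in_hom[OF Q1 A] a a' by auto
  have "main_mor A a = main_mor A a'"
    using alpha_main_fun[OF A a] alpha_main_fun[OF A a'] eq by simp
  then have "Psim (Cmp C ?\<alpha> eta0) = Psim (Cmp C ?\<alpha>' eta0)"
    using endofunctor_Cmp[OF Psi eta0] \<alpha> \<alpha>' by simp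
  moreover have "Cmp C ?\<alpha> eta0 \<in> Mor C" "Cmp C ?\<alpha>' eta0 \<in> Mor C"
    using Cmp_in_hom[OF cat eta0] \<alpha> \<alpha>' unfolding hom_def by auto
  ultimately have comp_eq: "Cmp C ?\<alpha> eta0 = Cmp C ?\<alpha>' eta0"
    using Psi_inj by (simp add: inj_on_eq_iff)
  have "Qm ?\<alpha> y = Qm ?\<alpha>' y" if "y \<in> Qo A0" for y
  proof -
    obtain z where z: "z \<in> Qo B0" "y = Qm eta0 z" using eta0_surj \<open>y \<in> Qo A0\<close> by blast
    then show ?thesis
      using comp_eq set_functor_Cmp[OF Q eta0 \<alpha> z(1)] set_functor_Cmp[OF Q eta0 \<alpha>' z(1)]
      by simp
  qed
  then have "?\<alpha> = ?\<alpha>'" using faith \<alpha> \<alpha>' unfolding faithful_def by blast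
  then show "a = a'" using alpha_apply[OF Q1 A] a a' by metis
qed

lemma main_fun_natural:
  assumes \<mu>: "\<mu> \<in> hom C A B" and a: "a \<in> Qo A"
  shows "s B (Qm \<mu> a) = Qm (Psim \<mu>) (s A a)"
proof -
  have A: "A \<in> Ob C" and B: "B \<in> Ob C" using hom_Ob[OF cat \<mu>] .
  let ?\<alpha> = "alpha C Qm A0 x0 A a"
  have \<alpha>: "?\<alpha> \<in> hom C A0 A" using alpha_in_hom[OF Q1 A a] .
  have "alpha C Qm A0 x0 B (Qm \<mu> a) = Cmp C \<mu> ?\<alpha>"
    using alpha_eqI[OF Q1 B Cmp_in_hom[OF cat \<alpha> \<mu>]] set_functor_Cmp[OF Q \<alpha> \<mu> x0]
      alpha_apply[OF Q1 A a] set_functor_in[OF Q \<mu> a] by simp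
  then have "s B (Qm \<mu> a) = Qm (Cmp C (Cmp C (Psim \<mu>) (Psim ?\<alpha>)) (Psim eta0)) x0"
    unfolding main_fun_def using endofunctor_Cmp[OF Psi \<alpha> \<mu>] by simp
  also have "\<dots> = Qm (Cmp C (Psim \<mu>) (main_mor A a)) x0"
    using Cmp_assoc[OF cat _ endofunctor_hom[OF Psi \<alpha>] endofunctor_hom[OF Psi \<mu>]]
      endofunctor_hom[OF Psi eta0] Psi_B0 by simp
  also have "\<dots> = Qm (Psim \<mu>) (s A a)"
    unfolding main_fun_def
    using set_functor_Cmp[OF Q main_mor_in_hom[OF A a] endofunctor_hom[OF Psi \<mu>] x0] .
  finally show ?thesis .
qed

end

lemma central_function_comp:
  assumes cat: "is_category C" and Q: "is_set_functor C Qo Qm"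
    and F: "is_endofunctor C Fo Fm"
    and GF_Ob: "\<And>A. A \<in> Ob C \<Longrightarrow> Go (Fo A) = A"
    and GF_Mor: "\<And>f. f \<in> Mor C \<Longrightarrow> Gm (Fm f) = f"
    and t_bij: "\<forall>A \<in> Ob C. C_bijection C Qo Qm A (Fo A) (t A)"
    and t_nat: "\<And>A B \<mu> x. \<mu> \<in> hom C A B \<Longrightarrow> x \<in> Qo A \<Longrightarrow>
                  Qm (Fm \<mu>) (t A x) = t B (Qm \<mu> x)"
    and u_in: "\<And>B y. B \<in> Ob C \<Longrightarrow> y \<in> Qo B \<Longrightarrow> u B y \<in> Qo (Go B)"
    and u_inj: "\<And>B. B \<in> Ob C \<Longrightarrow> inj_on (u B) (Qo B)"
    and u_nat: "\<And>B B' \<nu> y. \<nu> \<in> hom C B B' \<Longrightarrow> y \<in> Qo B \<Longrightarrow>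
                  u B' (Qm \<nu> y) = Qm (Gm \<nu>) (u B y)"
  shows "central_function C Qo Qm (\<lambda>A. u (Fo A) \<circ> t A)"
proof -
  have t_in: "t A x \<in> Qo (Fo A)" if "A \<in> Ob C" "x \<in> Qo A" for A x
    using t_bij that unfolding C_bijection_def by blast
  have d_nat: "u (Fo B) (t B (Qm \<mu> x)) = Qm \<mu> (u (Fo A) (t A x))"
    if \<mu>: "\<mu> \<in> hom C A B" and x: "x \<in> Qo A" for A B \<mu> x
  proof -
    have "u (Fo B) (t B (Qm \<mu> x)) = u (Fo B) (Qm (Fm \<mu>) (t A x))"
      using t_nat[OF \<mu> x] by simp
    also have "\<dots> = Qm (Gm (Fm \<mu>)) (u (Fo A) (t A x))"
      using u_nat[OF endofunctor_hom[OF F \<mu>] t_in[OF hom_Ob(1)[OF cat \<mu>] x]] .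
    also have "\<dots> = Qm \<mu> (u (Fo A) (t A x))"
      using GF_Mor \<mu> unfolding hom_def by simp
    finally show ?thesis .
  qed
  have "C_bijection C Qo Qm A A (u (Fo A) \<circ> t A)" if A: "A \<in> Ob C" for A
  proof -
    have FA: "Fo A \<in> Ob C" using endofunctor_Ob[OF F A] .
    have t_inj: "inj_on (t A) (Qo A)" using t_bij A unfolding C_bijection_def by blast
    have "(u (Fo A) \<circ> t A) ` Qo A \<subseteq> Qo A"
      using u_in[OF FA] t_in[OF A] GF_Ob[OF A] by auto
    moreover have "inj_on (u (Fo A) \<circ> t A) (Qo A)"
      using t_in[OF A] by (intro comp_inj_on t_inj inj_on_subset[OF u_inj[OF FA]]) blast
    moreover have "\<alpha>1 = \<alpha>2"
      if \<alpha>1: "\<alpha>1 \<in> hom C A D" and \<alpha>2: "\<alpha>2 \<in> hom C A D"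
        and eq: "\<forall>x \<in> Qo A. Qm \<alpha>1 ((u (Fo A) \<circ> t A) x) = Qm \<alpha>2 ((u (Fo A) \<circ> t A) x)" for D \<alpha>1 \<alpha>2
    proof -
      have FD: "Fo D \<in> Ob C" using endofunctor_Ob[OF F hom_Ob(2)[OF cat \<alpha>1]] .
      have "Qm (Fm \<alpha>1) (t A x) = Qm (Fm \<alpha>2) (t A x)" if x: "x \<in> Qo A" for x
      proof (rule inj_onD[OF u_inj[OF FD]])
        show "u (Fo D) (Qm (Fm \<alpha>1) (t A x)) = u (Fo D) (Qm (Fm \<alpha>2) (t A x))"
          using d_nat[OF \<alpha>1 x] d_nat[OF \<alpha>2 x] eq x unfolding t_nat[OF \<alpha>1 x] t_nat[OF \<alpha>2 x]
          by simp
        show "Qm (Fm \<alpha>1) (t A x) \<in> Qo (Fo D)" "Qm (Fm \<alpha>2) (t A x) \<in> Qo (Fo D)"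
          using set_functor_in[OF Q endofunctor_hom[OF F] t_in[OF A x]] \<alpha>1 \<alpha>2 by auto
      qed
      then have "Fm \<alpha>1 = Fm \<alpha>2"
        using t_bij A endofunctor_hom[OF F \<alpha>1] endofunctor_hom[OF F \<alpha>2]
        unfolding C_bijection_def by blast
      then show "\<alpha>1 = \<alpha>2" using GF_Mor \<alpha>1 \<alpha>2 unfolding hom_def by (metis mem_Collect_eq)
    qed
    ultimately show ?thesis unfolding C_bijection_def by blast
  qed
  then show ?thesis
    unfolding central_function_def comp_def using d_nat by blast
qed

theorem proposition1:
  fixes C :: "('o,'m) cat" and Qo :: "'o \<Rightarrow> 'x set" and Qm :: "'m \<Rightarrow> 'x \<Rightarrow> 'x"
    and A0 :: 'o and x0 :: 'x
    and Phio :: "'o \<Rightarrow> 'o" and Phim :: "'m \<Rightarrow> 'm"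
    and t :: "'o \<Rightarrow> 'x \<Rightarrow> 'x"
    and eta0P :: 'm and eta0I :: 'm
  assumes cat: "is_category C"
    and Q: "is_set_functor C Qo Qm"
    and faith: "faithful C Qo Qm"
    and A0: "A0 \<in> Ob C" and x0: "x0 \<in> Qo A0"
    and Q1: "cond_1Q C Qo Qm A0 x0"
    and Q2: "cond_2Q C Qo Qm A0"
    and Phi: "is_automorphism C Phio Phim"
    and etaP: "eta0_ok C Qo Qm A0 Phio (inv_into (Ob C) Phio) eta0P"
    and etaI: "eta0_ok C Qo Qm A0 (inv_into (Ob C) Phio) Phio eta0I"
    and t_bij: "\<forall>A \<in> Ob C. C_bijection C Qo Qm A (Phio A) (t A)"
    and t_nat: "\<forall>A B \<mu>. \<mu> \<in> hom C A B \<longrightarrow>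
                  (\<forall>x \<in> Qo A. Qm (Phim \<mu>) (t A x) = t B (Qm \<mu> x))"
  shows "\<exists>d. central_function C Qo Qm d \<and>
    (\<forall>A \<in> Ob C.
       let sP = main_fun C Qm A0 x0 Phim eta0P A;
           sI = main_fun C Qm A0 x0 (inv_into (Mor C) Phim) eta0I (Phio A);
           c = sP \<circ> sI
       in \<forall>x \<in> Qo A. sP (d A x) \<in> c ` Qo (Phio A)
                   \<and> t A x = inv_into (Qo (Phio A)) c (sP (d A x)))"
proof -
  define Pi where "Pi = inv_into (Ob C) Phio"
  define Mi where "Mi = inv_into (Mor C) Phim"
  have Phi_inv: "is_automorphism C Pi Mi"
    unfolding Pi_def Mi_def by (rule is_automorphism_inv_into[OF cat Phi])
  note Pi_Phi = automorphism_inv_into_f_f_Ob[OF Phi, folded Pi_def]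
  note Mi_Phi = automorphism_inv_into_f_f_Mor[OF Phi, folded Mi_def]
  interpret P: main_function C Qo Qm A0 x0 Phio Phim "Pi A0" eta0P
    using cat Q faith x0 Q1 Phi etaP automorphism_f_inv_into_f_Ob[OF Phi A0]
    unfolding main_function_def is_automorphism_def eta0_ok_def bij_betw_def Pi_def by blast
  interpret I: main_function C Qo Qm A0 x0 Pi Mi "Phio A0" eta0I
    using cat Q faith x0 Q1 Phi_inv etaI Pi_Phi[OF A0]
    unfolding main_function_def is_automorphism_def eta0_ok_def bij_betw_def Pi_def by blast
  define d where "d A = I.s (Phio A) \<circ> t A" for A
  have "central_function C Qo Qm d"
    unfolding d_def using t_nat
    by (intro central_function_comp[OF cat Q P.Psi Pi_Phi Mi_Phi t_bij _ I.main_fun_in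
          I.inj_on_main_fun I.main_fun_natural]) auto
  moreover have "P.s A (d A x) \<in> (P.s A \<circ> I.s (Phio A)) ` Qo (Phio A)
      \<and> t A x = inv_into (Qo (Phio A)) (P.s A \<circ> I.s (Phio A)) (P.s A (d A x))"
    if A: "A \<in> Ob C" and x: "x \<in> Qo A" for A x
  proof -
    have PhiA: "Phio A \<in> Ob C" using endofunctor_Ob[OF P.Psi A] .
    have "inj_on (P.s A \<circ> I.s (Phio A)) (Qo (Phio A))"
      using I.main_fun_in[OF PhiA] Pi_Phi[OF A]
      by (intro comp_inj_on I.inj_on_main_fun[OF PhiA] inj_on_subset[OF P.inj_on_main_fun[OF A]])
        auto
    moreover have "t A x \<in> Qo (Phio A)" using t_bij A x unfolding C_bijection_def by blast
    ultimately show ?thesis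
      unfolding d_def using inv_into_f_f[of "P.s A \<circ> I.s (Phio A)"] by auto
  qed
  ultimately show ?thesis unfolding Let_def Mi_def[symmetric] by blast
qed

end
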